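(* Let $\alpha\in\mathbb{C}^N$. For any distinct $i,j,k\in\{1,\dots,N\}$, $$\partial_kM_{i,j}(\alpha)-\partial_iM_{j,k}(\alpha)=-\alpha_j\frac{x_k-x_i}{(x_i-x_j)(x_j-x_k)}M_{i,k}(\alpha)-\frac{\alpha_k}{x_j-x_k}M_{i,j}(\alpha)-\frac{\alpha_i}{x_i-x_j}M_{j,k}(\alpha).$$ Moreover, if $\alpha_j\ne 0$ for all $1\le j\le N$, the left ideal $\mathcal{I}(\alpha)\subset\mathcal{R}$ generated by all $M_{p,q}(\alpha)$, $1\le p\ne q\le N$, is generated by $M_{1,2}(\alpha),M_{2,3}(\alpha),\dots,M_{N-1,N}(\alpha)$.
   Context: $x=(x_1,\dots,x_N)$, $\partial_p=\partial/\partial x_p$. $\mathcal{R}=\mathbb{C}[x_1,\dots,x_N,\prod_{a<b}(x_a-x_b)^{-1}]\langle\partial_1,\dots,\partial_N\rangle$ is the ring of differential operators with coefficients in the localization of the polynomial ring at $\prod_{a<b}(x_a-x_b)$. For $p\ne q$: $M_{p,q}(\alpha)=\partial_p\partial_q+\frac{\alpha_q}{x_p-x_q}\partial_p+\frac{\alpha_p}{x_q-x_p}\partial_q$ (note $M_{p,q}(\alpha)=M_{q,p}(\alpha)$). *)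

theory Defs
  imports "HOL-Analysis.Analysis"
begin

type_synonym pt = "nat \<Rightarrow> complex"
type_synonym fn = "pt \<Rightarrow> complex"
type_synonym dop = "fn \<Rightarrow> fn"

definition pd :: "nat \<Rightarrow> fn \<Rightarrow> fn" where
  "pd p f = (\<lambda>x. deriv (\<lambda>t. f (x(p := t))) (x p))"

definition Ureg :: "nat \<Rightarrow> pt set" where
  "Ureg N = {x. \<forall>a\<in>{1..N}. \<forall>b\<in>{1..N}. a \<noteq> b \<longrightarrow> x a \<noteq> x b}"

text \<open>The coefficient ring C[x_1..x_N, prod (x_a-x_b)^-1], realised as functions.\<close>
inductive_set coeff_ring :: "nat \<Rightarrow> fn set" for N where
  const: "(\<lambda>x. c) \<in> coeff_ring N"
| var: "i \<in> {1..N} \<Longrightarrow> (\<lambda>x. x i) \<in> coeff_ring N"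
| inv: "a \<in> {1..N} \<Longrightarrow> b \<in> {1..N} \<Longrightarrow> a \<noteq> b \<Longrightarrow> (\<lambda>x. 1 / (x a - x b)) \<in> coeff_ring N"
| add: "f \<in> coeff_ring N \<Longrightarrow> g \<in> coeff_ring N \<Longrightarrow> (\<lambda>x. f x + g x) \<in> coeff_ring N"
| mult: "f \<in> coeff_ring N \<Longrightarrow> g \<in> coeff_ring N \<Longrightarrow> (\<lambda>x. f x * g x) \<in> coeff_ring N"

definition mulop :: "fn \<Rightarrow> dop" where
  "mulop f = (\<lambda>g x. f x * g x)"

text \<open>The ring R of differential operators, realised as operators on functions.\<close>
inductive_set diffops :: "nat \<Rightarrow> dop set" for N where
  coeff: "f \<in> coeff_ring N \<Longrightarrow> mulop f \<in> diffops N"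
| der: "p \<in> {1..N} \<Longrightarrow> pd p \<in> diffops N"
| add: "P \<in> diffops N \<Longrightarrow> Q \<in> diffops N \<Longrightarrow> (\<lambda>g x. P g x + Q g x) \<in> diffops N"
| comp: "P \<in> diffops N \<Longrightarrow> Q \<in> diffops N \<Longrightarrow> P \<circ> Q \<in> diffops N"

text \<open>Equality in R: via the faithful action of R on its coefficient ring (on the regular set).\<close>
definition op_eq :: "nat \<Rightarrow> dop \<Rightarrow> dop \<Rightarrow> bool" where
  "op_eq N P Q \<longleftrightarrow> (\<forall>g\<in>coeff_ring N. \<forall>x\<in>Ureg N. P g x = Q g x)"

inductive_set left_ideal :: "nat \<Rightarrow> dop set \<Rightarrow> dop set" for N S where
  zero: "(\<lambda>g x. 0) \<in> left_ideal N S"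
| step: "r \<in> diffops N \<Longrightarrow> s \<in> S \<Longrightarrow> J \<in> left_ideal N S \<Longrightarrow>
         (\<lambda>g x. (r \<circ> s) g x + J g x) \<in> left_ideal N S"

definition same_opset :: "nat \<Rightarrow> dop set \<Rightarrow> dop set \<Rightarrow> bool" where
  "same_opset N I J \<longleftrightarrow> (\<forall>P\<in>I. \<exists>Q\<in>J. op_eq N P Q) \<and> (\<forall>Q\<in>J. \<exists>P\<in>I. op_eq N P Q)"

definition Mop :: "(nat \<Rightarrow> complex) \<Rightarrow> nat \<Rightarrow> nat \<Rightarrow> dop" where
  "Mop \<alpha> p q = (\<lambda>g x. pd p (pd q g) x + \<alpha> q / (x p - x q) * pd p g x
                        + \<alpha> p / (x q - x p) * pd q g x)"

end

theory Submission
  imports Defs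
begin

text \<open>
  Expanding both sides of the identity, the third-order terms cancel because partial derivatives
  commute on the coefficient ring, and what is left is an identity between rational functions
  of \<open>x\<^sub>i, x\<^sub>j, x\<^sub>k\<close>. When \<open>\<alpha>\<^sub>j \<noteq> 0\<close> the coefficient of \<open>M\<^sub>i\<^sub>k\<close> is a unit of \<open>R\<close>,
  so the identity expresses \<open>M\<^sub>i\<^sub>k\<close> as a left combination of
  \<open>\<partial>\<^sub>k M\<^sub>i\<^sub>j, \<partial>\<^sub>i M\<^sub>j\<^sub>k, M\<^sub>i\<^sub>j, M\<^sub>j\<^sub>k\<close>. Walking along \<open>p < p + 1 < \<dots> < q\<close> puts every
  \<open>M\<^sub>p\<^sub>q\<close> with \<open>p < q\<close> into the ideal generated by consecutive ones, and \<open>M\<^sub>p\<^sub>q = M\<^sub>q\<^sub>p\<close>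
  does the rest.
\<close>

section \<open>Partial derivatives on the regular set\<close>

lemma Ureg_neq: "x \<in> Ureg N \<Longrightarrow> a \<in> {1..N} \<Longrightarrow> b \<in> {1..N} \<Longrightarrow> a \<noteq> b \<Longrightarrow> x a \<noteq> x b"
  unfolding Ureg_def by blast

lemma eventually_fun_upd_in_Ureg:
  assumes "x \<in> Ureg N" "p \<in> {1..N}"
  shows "\<forall>\<^sub>F t in nhds (x p). x(p := t) \<in> Ureg N"
proof -
  have "\<forall>\<^sub>F t in nhds (x p). \<forall>b\<in>{1..N} - {p}. t \<noteq> x b"
    using assms by (intro eventually_ball_finite ballI t1_space_nhds) (auto simp: Ureg_def)
  then show ?thesis
    by eventually_elim (use assms in \<open>auto simp: Ureg_def\<close>)
qed

lemma pd_cong_Ureg: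
  assumes "\<And>y. y \<in> Ureg N \<Longrightarrow> f y = g y" "x \<in> Ureg N" "p \<in> {1..N}"
  shows "pd p f x = pd p g x"
  unfolding pd_def using eventually_fun_upd_in_Ureg[OF assms(2,3)]
  by (intro deriv_cong_ev) (auto elim: eventually_mono simp: assms(1))

lemma has_field_derivative_inverse_diff:
  assumes "x a \<noteq> x b" "a \<noteq> b"
  shows "((\<lambda>t. 1 / ((x(p := t)) a - (x(p := t)) b)) has_field_derivative
           (if p = a then -1 else if p = b then 1 else 0) * (1 / (x a - x b)) * (1 / (x a - x b)))
         (at (x p))"
  using assms by (cases "p = a"; cases "p = b") (auto intro!: derivative_eq_intros simp: power2_eq_square)

lemma coeff_ring_has_partial_derivative:
  assumes "h \<in> coeff_ring N" "p \<in> {1..N}"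
  shows "\<exists>h'\<in>coeff_ring N. \<forall>x\<in>Ureg N. ((\<lambda>t. h (x(p := t))) has_field_derivative h' x) (at (x p))"
  using assms(1)
proof induction
  case (const c)
  show ?case by (intro bexI[of _ "\<lambda>x. 0"] coeff_ring.const) auto
next
  case (var i)
  show ?case
    by (intro bexI[of _ "\<lambda>x. if i = p then 1 else 0"] coeff_ring.const)
       (auto intro!: derivative_eq_intros)
next
  case (inv a b)
  let ?s = "if p = a then -1 else if p = b then 1 else 0 :: complex"
  show ?case
  proof (intro bexI[of _ "\<lambda>x. ?s * (1 / (x a - x b)) * (1 / (x a - x b))"] ballI)
    fix x assume "x \<in> Ureg N"
    then show "((\<lambda>t. 1 / ((x(p := t)) a - (x(p := t)) b)) has_field_derivative
                 ?s * (1 / (x a - x b)) * (1 / (x a - x b))) (at (x p))"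
      using inv by (intro has_field_derivative_inverse_diff Ureg_neq)
  qed (use inv in \<open>intro coeff_ring.intros\<close>)
next
  case (add f g)
  then obtain f' g' where "f' \<in> coeff_ring N" "g' \<in> coeff_ring N"
    and "\<forall>x\<in>Ureg N. ((\<lambda>t. f (x(p := t))) has_field_derivative f' x) (at (x p))"
        "\<forall>x\<in>Ureg N. ((\<lambda>t. g (x(p := t))) has_field_derivative g' x) (at (x p))" by blast
  then show ?case
    by (intro bexI[of _ "\<lambda>x. f' x + g' x"] coeff_ring.add ballI DERIV_add) blast+
next
  case (mult f g)
  then obtain f' g' where "f' \<in> coeff_ring N" "g' \<in> coeff_ring N"
    and "\<forall>x\<in>Ureg N. ((\<lambda>t. f (x(p := t))) has_field_derivative f' x) (at (x p))"
        "\<forall>x\<in>Ureg N. ((\<lambda>t. g (x(p := t))) has_field_derivative g' x) (at (x p))" by blast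
  note derivs = this
  show ?case
  proof (intro bexI[of _ "\<lambda>x. f' x * g x + f x * g' x"] ballI)
    fix x assume "x \<in> Ureg N"
    then have "((\<lambda>t. f (x(p := t)) * g (x(p := t))) has_field_derivative
                 f' x * g (x(p := x p)) + g' x * f (x(p := x p))) (at (x p))"
      using derivs by (intro DERIV_mult) blast+
    then show "((\<lambda>t. f (x(p := t)) * g (x(p := t))) has_field_derivative f' x * g x + f x * g' x) (at (x p))"
      by (simp add: mult.commute)
  qed (use derivs mult.hyps in \<open>intro coeff_ring.intros\<close>)
qed

text \<open>
  Operators only act as expected on functions that agree with an element of the coefficient ring
  on the regular set: these are closed under the \<open>pd p\<close>, on which \<open>pd p\<close> obeys the Leibniz rule
  and commutes.
\<close>

definition coeff_fns :: "nat \<Rightarrow> fn set" where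
  "coeff_fns N = {f. \<exists>h\<in>coeff_ring N. \<forall>x\<in>Ureg N. f x = h x}"

lemma coeff_ring_in_coeff_fns: "h \<in> coeff_ring N \<Longrightarrow> h \<in> coeff_fns N"
  unfolding coeff_fns_def by blast

lemma coeff_fns_cong: "f \<in> coeff_fns N \<Longrightarrow> (\<And>x. x \<in> Ureg N \<Longrightarrow> g x = f x) \<Longrightarrow> g \<in> coeff_fns N"
  unfolding coeff_fns_def by auto

lemma coeff_fns_const: "(\<lambda>x. c) \<in> coeff_fns N"
  by (intro coeff_ring_in_coeff_fns coeff_ring.const)

lemma coeff_fns_add:
  assumes "f \<in> coeff_fns N" "g \<in> coeff_fns N"
  shows "(\<lambda>x. f x + g x) \<in> coeff_fns N"
proof -
  obtain h k where "h \<in> coeff_ring N" "\<forall>x\<in>Ureg N. f x = h x" "k \<in> coeff_ring N" "\<forall>x\<in>Ureg N. g x = k x"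
    using assms unfolding coeff_fns_def by blast
  then show ?thesis
    unfolding coeff_fns_def by (intro CollectI bexI[of _ "\<lambda>x. h x + k x"] coeff_ring.add) auto
qed

lemma coeff_fns_mult:
  assumes "f \<in> coeff_fns N" "g \<in> coeff_fns N"
  shows "(\<lambda>x. f x * g x) \<in> coeff_fns N"
proof -
  obtain h k where "h \<in> coeff_ring N" "\<forall>x\<in>Ureg N. f x = h x" "k \<in> coeff_ring N" "\<forall>x\<in>Ureg N. g x = k x"
    using assms unfolding coeff_fns_def by blast
  then show ?thesis
    unfolding coeff_fns_def by (intro CollectI bexI[of _ "\<lambda>x. h x * k x"] coeff_ring.mult) auto
qed

lemma coeff_fns_divide_diff:
  assumes "a \<in> {1..N}" "b \<in> {1..N}" "a \<noteq> b"
  shows "(\<lambda>x. c / (x a - x b)) \<in> coeff_fns N"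
proof -
  have "(\<lambda>x. c * (1 / (x a - x b))) \<in> coeff_ring N"
    using assms by (intro coeff_ring.intros)
  then show ?thesis by (simp add: coeff_ring_in_coeff_fns)
qed

lemma coeff_fns_partial_derivative:
  assumes "f \<in> coeff_fns N" "p \<in> {1..N}"
  obtains f' where "f' \<in> coeff_ring N"
    "\<And>x. x \<in> Ureg N \<Longrightarrow> ((\<lambda>t. f (x(p := t))) has_field_derivative f' x) (at (x p))"
proof -
  obtain h where h: "h \<in> coeff_ring N" "\<And>x. x \<in> Ureg N \<Longrightarrow> f x = h x"
    using assms(1) unfolding coeff_fns_def by blast
  obtain h' where h': "h' \<in> coeff_ring N"
    "\<And>x. x \<in> Ureg N \<Longrightarrow> ((\<lambda>t. h (x(p := t))) has_field_derivative h' x) (at (x p))"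
    using coeff_ring_has_partial_derivative[OF h(1) assms(2)] by blast
  have "((\<lambda>t. f (x(p := t))) has_field_derivative h' x) (at (x p))" if x: "x \<in> Ureg N" for x
  proof -
    have "\<forall>\<^sub>F t in nhds (x p). f (x(p := t)) = h (x(p := t))"
      using eventually_fun_upd_in_Ureg[OF x assms(2)] by eventually_elim (rule h(2))
    then show ?thesis
      using h'(2)[OF x] by (subst DERIV_cong_ev[OF refl _ refl])
  qed
  with h'(1) show ?thesis by (rule that)
qed

lemma has_field_derivative_pd:
  assumes "f \<in> coeff_fns N" "p \<in> {1..N}" "x \<in> Ureg N"
  shows "((\<lambda>t. f (x(p := t))) has_field_derivative pd p f x) (at (x p))"
proof -
  obtain f' where "f' \<in> coeff_ring N"
    "\<And>x. x \<in> Ureg N \<Longrightarrow> ((\<lambda>t. f (x(p := t))) has_field_derivative f' x) (at (x p))"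
    using coeff_fns_partial_derivative[OF assms(1,2)] by blast
  with assms(3) show ?thesis
    unfolding pd_def by (metis DERIV_imp_deriv)
qed

lemma coeff_fns_pd: "f \<in> coeff_fns N \<Longrightarrow> p \<in> {1..N} \<Longrightarrow> pd p f \<in> coeff_fns N"
proof -
  assume f: "f \<in> coeff_fns N" and p: "p \<in> {1..N}"
  then obtain f' where f': "f' \<in> coeff_ring N"
    "\<And>x. x \<in> Ureg N \<Longrightarrow> ((\<lambda>t. f (x(p := t))) has_field_derivative f' x) (at (x p))"
    using coeff_fns_partial_derivative by blast
  have "pd p f x = f' x" if "x \<in> Ureg N" for x
    using has_field_derivative_pd[OF f p that] f'(2)[OF that] by (rule DERIV_unique)
  then show ?thesis
    using coeff_fns_cong[OF coeff_ring_in_coeff_fns[OF f'(1)]] by blast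
qed

lemma pd_add:
  assumes "f \<in> coeff_fns N" "g \<in> coeff_fns N" "p \<in> {1..N}" "x \<in> Ureg N"
  shows "pd p (\<lambda>y. f y + g y) x = pd p f x + pd p g x"
  unfolding pd_def[of p "\<lambda>y. f y + g y"]
  using assms by (intro DERIV_imp_deriv DERIV_add has_field_derivative_pd) simp_all

lemma pd_mult:
  assumes "f \<in> coeff_fns N" "g \<in> coeff_fns N" "p \<in> {1..N}" "x \<in> Ureg N"
  shows "pd p (\<lambda>y. f y * g y) x = pd p f x * g x + f x * pd p g x"
proof -
  have "((\<lambda>t. f (x(p := t)) * g (x(p := t))) has_field_derivative
          pd p f x * g (x(p := x p)) + pd p g x * f (x(p := x p))) (at (x p))"
    using assms by (intro DERIV_mult has_field_derivative_pd)
  then show ?thesis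
    unfolding pd_def[of p "\<lambda>y. f y * g y"] by (simp add: DERIV_imp_deriv mult.commute)
qed

lemma pd_const: "pd p (\<lambda>y. c) = (\<lambda>y. 0)"
  unfolding pd_def by simp

lemma pd_var: "pd p (\<lambda>y. y i) = (\<lambda>y. if i = p then 1 else 0)"
  unfolding pd_def by (rule ext) (auto intro!: DERIV_imp_deriv derivative_eq_intros)

lemma pd_divide_diff_other:
  "k \<noteq> i \<Longrightarrow> k \<noteq> j \<Longrightarrow> pd k (\<lambda>y. c / (y i - y j)) = (\<lambda>y. 0)"
  unfolding pd_def by simp

lemma pd_inverse_diff:
  assumes "a \<in> {1..N}" "b \<in> {1..N}" "a \<noteq> b" "x \<in> Ureg N"
  shows "pd p (\<lambda>y. 1 / (y a - y b)) x =
           (if p = a then -1 else if p = b then 1 else 0) * (1 / (x a - x b)) * (1 / (x a - x b))"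
  unfolding pd_def using assms
  by (intro DERIV_imp_deriv has_field_derivative_inverse_diff Ureg_neq)

lemma pd_pd_add:
  assumes "f \<in> coeff_fns N" "g \<in> coeff_fns N" "p \<in> {1..N}" "q \<in> {1..N}" "x \<in> Ureg N"
  shows "pd p (pd q (\<lambda>y. f y + g y)) x = pd p (pd q f) x + pd p (pd q g) x"
proof -
  have "pd p (pd q (\<lambda>y. f y + g y)) x = pd p (\<lambda>y. pd q f y + pd q g y) x"
    using assms by (intro pd_cong_Ureg pd_add)
  also have "\<dots> = pd p (pd q f) x + pd p (pd q g) x"
    using assms by (intro pd_add coeff_fns_pd)
  finally show ?thesis .
qed

lemma pd_pd_mult:
  assumes "f \<in> coeff_fns N" "g \<in> coeff_fns N" "p \<in> {1..N}" "q \<in> {1..N}" "x \<in> Ureg N"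
  shows "pd p (pd q (\<lambda>y. f y * g y)) x =
           pd p (pd q f) x * g x + pd q f x * pd p g x + pd p f x * pd q g x + f x * pd p (pd q g) x"
proof -
  have fq: "pd q f \<in> coeff_fns N" and gq: "pd q g \<in> coeff_fns N"
    using assms by (auto intro: coeff_fns_pd)
  have "pd p (pd q (\<lambda>y. f y * g y)) x = pd p (\<lambda>y. pd q f y * g y + f y * pd q g y) x"
    using assms by (intro pd_cong_Ureg pd_mult)
  also have "\<dots> = pd p (\<lambda>y. pd q f y * g y) x + pd p (\<lambda>y. f y * pd q g y) x"
    using assms fq gq by (intro pd_add coeff_fns_mult)
  also have "\<dots> = pd p (pd q f) x * g x + pd q f x * pd p g x + (pd p f x * pd q g x + f x * pd p (pd q g) x)"
    using assms fq gq by (simp add: pd_mult)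
  finally show ?thesis by (simp add: add.assoc)
qed

lemma pd_commute_coeff_ring:
  assumes "h \<in> coeff_ring N" "p \<in> {1..N}" "q \<in> {1..N}" "x \<in> Ureg N"
  shows "pd p (pd q h) x = pd q (pd p h) x"
  using assms(1)
proof induction
  case (const c)
  show ?case by (simp add: pd_const)
next
  case (var i)
  show ?case by (simp add: pd_var pd_const)
next
  case (inv a b)
  define u where "u = (\<lambda>y :: pt. 1 / (y a - y b))"
  define s where "s = (\<lambda>r. if r = a then -1 else if r = b then 1 else 0 :: complex)"
  have u: "u \<in> coeff_fns N"
    unfolding u_def using inv by (intro coeff_ring_in_coeff_fns coeff_ring.inv)
  have pd_u: "pd r u y = s r * u y * u y" if "y \<in> Ureg N" for r y
    unfolding u_def s_def using pd_inverse_diff[OF inv that] .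
  have "pd r (pd r' u) x = 2 * s r * s r' * u x * u x * u x" if "r \<in> {1..N}" for r r'
  proof -
    have "pd r (pd r' u) x = pd r (\<lambda>y. (s r' * u y) * u y) x"
      using that assms(4) pd_u by (intro pd_cong_Ureg) (auto simp: mult.assoc)
    also have "\<dots> = pd r (\<lambda>y. s r' * u y) x * u x + (s r' * u x) * pd r u x"
      using that assms(4) u by (intro pd_mult coeff_fns_mult coeff_fns_const)
    also have "pd r (\<lambda>y. s r' * u y) x = s r' * pd r u x"
      using that assms(4) u by (simp add: pd_mult coeff_fns_const pd_const)
    finally show ?thesis using assms(4) by (simp add: pd_u algebra_simps)
  qed
  then show ?case using assms(2,3) by (simp add: u_def[symmetric] mult_ac)
next
  case (add f g)
  then show ?case
    using pd_pd_add[OF coeff_ring_in_coeff_fns coeff_ring_in_coeff_fns, of f N g] assms(2-4) by simp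
next
  case (mult f g)
  then show ?case
    using pd_pd_mult[OF coeff_ring_in_coeff_fns coeff_ring_in_coeff_fns, of f N g] assms(2-4)
    by (simp add: algebra_simps)
qed

lemma pd_commute:
  assumes "f \<in> coeff_fns N" "p \<in> {1..N}" "q \<in> {1..N}" "x \<in> Ureg N"
  shows "pd p (pd q f) x = pd q (pd p f) x"
proof -
  obtain h where h: "h \<in> coeff_ring N" "\<forall>y\<in>Ureg N. f y = h y"
    using assms(1) unfolding coeff_fns_def by blast
  have "pd r (pd r' f) x = pd r (pd r' h) x" if "r \<in> {1..N}" "r' \<in> {1..N}" for r r'
    using that assms(4) h(2) by (intro pd_cong_Ureg) auto
  then show ?thesis
    using pd_commute_coeff_ring[OF h(1) assms(2-4)] assms(2,3) by simp
qed

section \<open>The compatibility identity\<close>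

lemma coeff_fns_Mop:
  assumes "g \<in> coeff_fns N" "p \<in> {1..N}" "q \<in> {1..N}" "p \<noteq> q"
  shows "Mop \<alpha> p q g \<in> coeff_fns N"
  unfolding Mop_def using assms
  by (intro coeff_fns_add coeff_fns_mult coeff_fns_divide_diff coeff_fns_pd) auto

lemma Mop_commute:
  assumes "g \<in> coeff_fns N" "p \<in> {1..N}" "q \<in> {1..N}" "x \<in> Ureg N"
  shows "Mop \<alpha> p q g x = Mop \<alpha> q p g x"
  unfolding Mop_def using pd_commute[OF assms] by (simp add: add_ac)

lemma pd_Mop:
  assumes "g \<in> coeff_fns N" "i \<in> {1..N}" "j \<in> {1..N}" "k \<in> {1..N}" "i \<noteq> j" "k \<noteq> i" "k \<noteq> j"
    and "x \<in> Ureg N"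
  shows "pd k (Mop \<alpha> i j g) x = pd k (pd i (pd j g)) x + \<alpha> j / (x i - x j) * pd k (pd i g) x
           + \<alpha> i / (x j - x i) * pd k (pd j g) x"
proof -
  have "(\<lambda>y. c / (y a - y b) * pd a g y) \<in> coeff_fns N"
    if "a \<in> {1..N}" "b \<in> {1..N}" "a \<noteq> b" for a b c
    using that assms(1) by (intro coeff_fns_mult coeff_fns_divide_diff coeff_fns_pd)
  then have fns: "(\<lambda>y. \<alpha> j / (y i - y j) * pd i g y) \<in> coeff_fns N"
                 "(\<lambda>y. \<alpha> i / (y j - y i) * pd j g y) \<in> coeff_fns N"
    using assms(2,3,5) by auto
  have scaled: "pd k (\<lambda>y. c / (y a - y b) * f y) x = c / (x a - x b) * pd k f x"
    if "f \<in> coeff_fns N" "a \<in> {1..N}" "b \<in> {1..N}" "a \<noteq> b" "k \<noteq> a" "k \<noteq> b" for c a b f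
    using that assms(4,8)
    by (subst pd_mult) (auto intro: coeff_fns_divide_diff simp: pd_divide_diff_other)
  have "pd k (Mop \<alpha> i j g) x = pd k (\<lambda>y. pd i (pd j g) y + \<alpha> j / (y i - y j) * pd i g y) x
                                 + pd k (\<lambda>y. \<alpha> i / (y j - y i) * pd j g y) x"
    unfolding Mop_def using assms fns by (intro pd_add coeff_fns_add coeff_fns_pd) auto
  also have "pd k (\<lambda>y. pd i (pd j g) y + \<alpha> j / (y i - y j) * pd i g y) x =
               pd k (pd i (pd j g)) x + pd k (\<lambda>y. \<alpha> j / (y i - y j) * pd i g y) x"
    using assms fns by (intro pd_add coeff_fns_pd) auto
  finally show ?thesis
    using assms by (simp only: scaled coeff_fns_pd simp_thms)
qed

text \<open>\<open>D\<close>, \<open>Dab\<close>, \<open>Da\<close> stand for the third, second and first partial derivatives of \<open>g\<close> at \<open>x\<close>.\<close>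

lemma compatibility_identity_scalar:
  fixes xi xj xk ai aj ak D Dij Dik Djk Di Dj Dk :: complex
  assumes "xi \<noteq> xj" "xj \<noteq> xk" "xi \<noteq> xk"
  shows "(D + aj / (xi - xj) * Dik + ai / (xj - xi) * Djk) - (D + ak / (xj - xk) * Dij + aj / (xk - xj) * Dik)
    = - aj * (xk - xi) / ((xi - xj) * (xj - xk)) * (Dik + ak / (xi - xk) * Di + ai / (xk - xi) * Dk)
      - ak / (xj - xk) * (Dij + aj / (xi - xj) * Di + ai / (xj - xi) * Dj)
      - ai / (xi - xj) * (Djk + ak / (xj - xk) * Dj + aj / (xk - xj) * Dk)"
proof -
  have "(xi - xj) * inverse (xi - xj) = 1" "(xj - xk) * inverse (xj - xk) = 1"
    "(xi - xk) * inverse (xi - xk) = 1"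
    using assms by auto
  moreover have "inverse (xj - xi) = - inverse (xi - xj)" "inverse (xk - xj) = - inverse (xj - xk)"
    "inverse (xk - xi) = - inverse (xi - xk)"
    by (metis inverse_minus_eq minus_diff_eq)+
  ultimately show ?thesis
    unfolding divide_inverse inverse_mult_distrib by algebra
qed

lemma pd_Mop_compatibility:
  assumes "g \<in> coeff_fns N" "i \<in> {1..N}" "j \<in> {1..N}" "k \<in> {1..N}" "i \<noteq> j" "j \<noteq> k" "i \<noteq> k"
    and "x \<in> Ureg N"
  shows "pd k (Mop \<alpha> i j g) x - pd i (Mop \<alpha> j k g) x =
           - \<alpha> j * (x k - x i) / ((x i - x j) * (x j - x k)) * Mop \<alpha> i k g x
           - \<alpha> k / (x j - x k) * Mop \<alpha> i j g x
           - \<alpha> i / (x i - x j) * Mop \<alpha> j k g x"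
proof -
  have "pd k (pd i (pd j g)) x = pd i (pd k (pd j g)) x"
    using assms by (intro pd_commute coeff_fns_pd)
  also have "\<dots> = pd i (pd j (pd k g)) x"
    using assms by (intro pd_cong_Ureg pd_commute)
  finally have Lk: "pd k (Mop \<alpha> i j g) x = pd i (pd j (pd k g)) x + \<alpha> j / (x i - x j) * pd i (pd k g) x
                  + \<alpha> i / (x j - x i) * pd j (pd k g) x"
    using assms by (simp add: pd_Mop pd_commute[of g N k])
  have Li: "pd i (Mop \<alpha> j k g) x = pd i (pd j (pd k g)) x + \<alpha> k / (x j - x k) * pd i (pd j g) x
                  + \<alpha> j / (x k - x j) * pd i (pd k g) x"
    using assms by (simp add: pd_Mop)
  have "x i \<noteq> x j" "x j \<noteq> x k" "x i \<noteq> x k"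
    using assms by (auto dest: Ureg_neq)
  then show ?thesis
    unfolding Lk Li unfolding Mop_def by (intro compatibility_identity_scalar)
qed

section \<open>Left ideals up to equality on coefficient functions\<close>

text \<open>
  \<open>op_eq\<close> only tests operators on \<open>coeff_ring\<close>, whereas \<open>r \<circ> P\<close> applies \<open>r\<close> to \<open>P g\<close>, which merely
  lies in \<open>coeff_fns\<close>; and \<open>left_ideal\<close> is not literally closed under left multiplication, since
  \<open>r\<close> distributes over sums only on \<open>coeff_fns\<close>. Hence ideal membership is tracked up to
  \<open>op_equiv\<close>, equality on all of \<open>coeff_fns\<close>.
\<close>

definition op_equiv :: "nat \<Rightarrow> dop \<Rightarrow> dop \<Rightarrow> bool" where
  "op_equiv N P Q \<longleftrightarrow> (\<forall>g\<in>coeff_fns N. \<forall>x\<in>Ureg N. P g x = Q g x)"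

definition admissible_op :: "nat \<Rightarrow> dop \<Rightarrow> bool" where
  "admissible_op N P \<longleftrightarrow> (\<forall>g\<in>coeff_fns N. P g \<in> coeff_fns N)
     \<and> (\<forall>f\<in>coeff_fns N. \<forall>g\<in>coeff_fns N. (\<forall>x\<in>Ureg N. f x = g x) \<longrightarrow> (\<forall>x\<in>Ureg N. P f x = P g x))
     \<and> (\<forall>f\<in>coeff_fns N. \<forall>g\<in>coeff_fns N. \<forall>x\<in>Ureg N. P (\<lambda>y. f y + g y) x = P f x + P g x)"

lemma admissible_opI:
  assumes "\<And>g. g \<in> coeff_fns N \<Longrightarrow> P g \<in> coeff_fns N"
    and "\<And>f g x. f \<in> coeff_fns N \<Longrightarrow> g \<in> coeff_fns N \<Longrightarrow> \<forall>y\<in>Ureg N. f y = g y \<Longrightarrow> x \<in> Ureg N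
           \<Longrightarrow> P f x = P g x"
    and "\<And>f g x. f \<in> coeff_fns N \<Longrightarrow> g \<in> coeff_fns N \<Longrightarrow> x \<in> Ureg N
           \<Longrightarrow> P (\<lambda>y. f y + g y) x = P f x + P g x"
  shows "admissible_op N P"
  unfolding admissible_op_def using assms by blast

lemma admissible_op_coeff_fns: "admissible_op N P \<Longrightarrow> g \<in> coeff_fns N \<Longrightarrow> P g \<in> coeff_fns N"
  unfolding admissible_op_def by blast

lemma admissible_op_cong:
  "admissible_op N P \<Longrightarrow> f \<in> coeff_fns N \<Longrightarrow> g \<in> coeff_fns N \<Longrightarrow> \<forall>y\<in>Ureg N. f y = g y \<Longrightarrow> x \<in> Ureg N
    \<Longrightarrow> P f x = P g x"
  unfolding admissible_op_def by blast

lemma admissible_op_additive: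
  "admissible_op N P \<Longrightarrow> f \<in> coeff_fns N \<Longrightarrow> g \<in> coeff_fns N \<Longrightarrow> x \<in> Ureg N
    \<Longrightarrow> P (\<lambda>y. f y + g y) x = P f x + P g x"
  unfolding admissible_op_def by blast

lemma admissible_op_zero: "admissible_op N (\<lambda>g x. 0)"
  by (rule admissible_opI) (simp_all add: coeff_fns_const)

lemma admissible_op_mulop: "f \<in> coeff_ring N \<Longrightarrow> admissible_op N (mulop f)"
  unfolding mulop_def
  by (rule admissible_opI) (simp_all add: coeff_fns_mult coeff_ring_in_coeff_fns distrib_left)

lemma admissible_op_pd: "p \<in> {1..N} \<Longrightarrow> admissible_op N (pd p)"
  by (rule admissible_opI) (auto intro: coeff_fns_pd pd_cong_Ureg pd_add)

lemma admissible_op_plus: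
  assumes P: "admissible_op N P" and Q: "admissible_op N Q"
  shows "admissible_op N (\<lambda>g x. P g x + Q g x)"
proof (rule admissible_opI)
  fix g assume g: "g \<in> coeff_fns N"
  show "(\<lambda>x. P g x + Q g x) \<in> coeff_fns N"
    by (rule coeff_fns_add[OF admissible_op_coeff_fns[OF P g] admissible_op_coeff_fns[OF Q g]])
next
  fix f g x assume fg: "f \<in> coeff_fns N" "g \<in> coeff_fns N" "\<forall>y\<in>Ureg N. f y = g y" "x \<in> Ureg N"
  show "P f x + Q f x = P g x + Q g x"
    using admissible_op_cong[OF P fg] admissible_op_cong[OF Q fg] by simp
next
  fix f g x assume fg: "f \<in> coeff_fns N" "g \<in> coeff_fns N" "x \<in> Ureg N"
  show "P (\<lambda>y. f y + g y) x + Q (\<lambda>y. f y + g y) x = P f x + Q f x + (P g x + Q g x)"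
    using admissible_op_additive[OF P fg] admissible_op_additive[OF Q fg] by simp
qed

lemma admissible_op_comp:
  assumes P: "admissible_op N P" and Q: "admissible_op N Q"
  shows "admissible_op N (P \<circ> Q)"
proof (rule admissible_opI)
  fix g assume "g \<in> coeff_fns N"
  then show "(P \<circ> Q) g \<in> coeff_fns N"
    using admissible_op_coeff_fns[OF P] admissible_op_coeff_fns[OF Q] by simp
next
  fix f g x assume f: "f \<in> coeff_fns N" and g: "g \<in> coeff_fns N"
    and fg: "\<forall>y\<in>Ureg N. f y = g y" and x: "x \<in> Ureg N"
  have "\<forall>y\<in>Ureg N. Q f y = Q g y"
    using admissible_op_cong[OF Q f g fg] by blast
  then show "(P \<circ> Q) f x = (P \<circ> Q) g x"
    using admissible_op_cong[OF P admissible_op_coeff_fns[OF Q f] admissible_op_coeff_fns[OF Q g] _ x]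
    by simp
next
  fix f g x assume f: "f \<in> coeff_fns N" and g: "g \<in> coeff_fns N" and x: "x \<in> Ureg N"
  have "P (Q (\<lambda>y. f y + g y)) x = P (\<lambda>y. Q f y + Q g y) x"
  proof (rule admissible_op_cong[OF P _ _ _ x])
    show "Q (\<lambda>y. f y + g y) \<in> coeff_fns N" "(\<lambda>y. Q f y + Q g y) \<in> coeff_fns N"
      using f g by (simp_all add: admissible_op_coeff_fns[OF Q] coeff_fns_add)
    show "\<forall>y\<in>Ureg N. Q (\<lambda>y. f y + g y) y = Q f y + Q g y"
      using admissible_op_additive[OF Q f g] by blast
  qed
  also have "\<dots> = P (Q f) x + P (Q g) x"
    by (rule admissible_op_additive[OF P admissible_op_coeff_fns[OF Q f] admissible_op_coeff_fns[OF Q g] x])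
  finally show "(P \<circ> Q) (\<lambda>y. f y + g y) x = (P \<circ> Q) f x + (P \<circ> Q) g x"
    by simp
qed

lemma diffops_admissible: "r \<in> diffops N \<Longrightarrow> admissible_op N r"
proof (induction rule: diffops.induct)
  case (coeff f)
  then show ?case by (rule admissible_op_mulop)
next
  case (der p)
  then show ?case by (rule admissible_op_pd)
next
  case (add P Q)
  from add.IH show ?case by (rule admissible_op_plus)
next
  case (comp P Q)
  from comp.IH show ?case by (rule admissible_op_comp)
qed

lemma admissible_op_Mop:
  assumes "p \<in> {1..N}" "q \<in> {1..N}" "p \<noteq> q"
  shows "admissible_op N (Mop \<alpha> p q)"
proof (rule admissible_opI)
  fix g assume "g \<in> coeff_fns N"
  then show "Mop \<alpha> p q g \<in> coeff_fns N" using assms by (rule coeff_fns_Mop)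
next
  fix f g :: fn and x assume fg: "\<forall>y\<in>Ureg N. f y = g y" and x: "x \<in> Ureg N"
  have "pd q f y = pd q g y" if "y \<in> Ureg N" for y
    using fg that assms(2) by (intro pd_cong_Ureg) auto
  moreover have "pd p f x = pd p g x" "pd p (pd q f) x = pd p (pd q g) x"
    using fg x assms(1,2) calculation by (auto intro!: pd_cong_Ureg)
  ultimately show "Mop \<alpha> p q f x = Mop \<alpha> p q g x"
    unfolding Mop_def using fg x by simp
next
  fix f g x assume "f \<in> coeff_fns N" "g \<in> coeff_fns N" "x \<in> Ureg N"
  then show "Mop \<alpha> p q (\<lambda>y. f y + g y) x = Mop \<alpha> p q f x + Mop \<alpha> p q g x"
    unfolding Mop_def using assms by (simp add: pd_pd_add pd_add algebra_simps)
qed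

lemma left_ideal_admissible:
  assumes "\<forall>s\<in>S. admissible_op N s" "P \<in> left_ideal N S"
  shows "admissible_op N P"
  using assms(2)
proof induction
  case zero
  show ?case by (rule admissible_op_zero)
next
  case (step r s J)
  have "admissible_op N (r \<circ> s)"
    using step.hyps assms(1) by (intro admissible_op_comp[OF diffops_admissible]) auto
  then show ?case using step.IH by (rule admissible_op_plus)
qed

lemma left_ideal_mono:
  assumes "S \<subseteq> T" "P \<in> left_ideal N S"
  shows "P \<in> left_ideal N T"
  using assms(2)
proof induction
  case zero
  show ?case by (rule left_ideal.zero)
next
  case (step r s J)
  with assms(1) show ?case by (intro left_ideal.step) auto
qed

lemma left_ideal_plus:
  assumes "P \<in> left_ideal N S" "Q \<in> left_ideal N S"
  shows "(\<lambda>g x. P g x + Q g x) \<in> left_ideal N S"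
  using assms(1)
proof induction
  case zero
  then show ?case using assms(2) by simp
next
  case (step r s J)
  then show ?case
    using left_ideal.step[OF step.hyps(1,2) step.IH] by (simp add: add.assoc)
qed

lemma left_ideal_comp:
  assumes S: "\<forall>s\<in>S. admissible_op N s" and r: "r \<in> diffops N" and Q: "Q \<in> left_ideal N S"
  shows "\<exists>Q'\<in>left_ideal N S. op_equiv N (r \<circ> Q) Q'"
  using Q
proof induction
  case zero
  have "r (\<lambda>y. 0 + 0) x = r (\<lambda>y. 0) x + r (\<lambda>y. 0) x" if "x \<in> Ureg N" for x
    using admissible_op_additive[OF diffops_admissible[OF r] coeff_fns_const coeff_fns_const that] .
  then have "op_equiv N (r \<circ> (\<lambda>g x. 0)) (\<lambda>g x. 0)"
    unfolding op_equiv_def by simp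
  then show ?case using left_ideal.zero by blast
next
  case (step r' s J)
  then obtain Q' where Q': "Q' \<in> left_ideal N S" "op_equiv N (r \<circ> J) Q'" by blast
  have r's: "admissible_op N (r' \<circ> s)" and J: "admissible_op N J"
    using step.hyps S by (auto intro: admissible_op_comp[OF diffops_admissible] left_ideal_admissible)
  have "op_equiv N (r \<circ> (\<lambda>g x. (r' \<circ> s) g x + J g x)) (\<lambda>g x. ((r \<circ> r') \<circ> s) g x + Q' g x)"
    unfolding op_equiv_def
  proof (intro ballI)
    fix g x assume g: "g \<in> coeff_fns N" and x: "x \<in> Ureg N"
    have "r (\<lambda>y. (r' \<circ> s) g y + J g y) x = r ((r' \<circ> s) g) x + r (J g) x"
      using admissible_op_additive[OF diffops_admissible[OF r]
          admissible_op_coeff_fns[OF r's g] admissible_op_coeff_fns[OF J g] x] .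
    with Q'(2) g x show "(r \<circ> (\<lambda>g x. (r' \<circ> s) g x + J g x)) g x = ((r \<circ> r') \<circ> s) g x + Q' g x"
      unfolding op_equiv_def by simp
  qed
  moreover have "(\<lambda>g x. ((r \<circ> r') \<circ> s) g x + Q' g x) \<in> left_ideal N S"
    using diffops.comp[OF r step.hyps(1)] step.hyps(2) Q'(1) by (rule left_ideal.step)
  ultimately show ?case by blast
qed

definition left_ideal_mod :: "nat \<Rightarrow> dop set \<Rightarrow> dop set" where
  "left_ideal_mod N S = {P. \<exists>Q\<in>left_ideal N S. op_equiv N P Q}"

lemma left_ideal_mod_equiv: "P \<in> left_ideal_mod N S \<Longrightarrow> op_equiv N P' P \<Longrightarrow> P' \<in> left_ideal_mod N S"
  unfolding left_ideal_mod_def op_equiv_def by auto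

lemma left_ideal_subset_left_ideal_mod: "P \<in> left_ideal N S \<Longrightarrow> P \<in> left_ideal_mod N S"
  unfolding left_ideal_mod_def op_equiv_def by blast

lemma generator_in_left_ideal_mod:
  assumes "s \<in> S"
  shows "s \<in> left_ideal_mod N S"
proof -
  have "(\<lambda>g x. (mulop (\<lambda>x. 1) \<circ> s) g x + 0) \<in> left_ideal N S"
    using left_ideal.step[OF diffops.coeff[OF coeff_ring.const] assms left_ideal.zero] .
  then show ?thesis
    by (rule left_ideal_mod_equiv[OF left_ideal_subset_left_ideal_mod])
       (simp add: op_equiv_def mulop_def)
qed

lemma left_ideal_mod_plus:
  assumes "P \<in> left_ideal_mod N S" "Q \<in> left_ideal_mod N S"
  shows "(\<lambda>g x. P g x + Q g x) \<in> left_ideal_mod N S"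
proof -
  obtain P' Q' where "P' \<in> left_ideal N S" "op_equiv N P P'" "Q' \<in> left_ideal N S" "op_equiv N Q Q'"
    using assms unfolding left_ideal_mod_def by blast
  then have "op_equiv N (\<lambda>g x. P g x + Q g x) (\<lambda>g x. P' g x + Q' g x)"
    unfolding op_equiv_def by simp
  with \<open>P' \<in> left_ideal N S\<close> \<open>Q' \<in> left_ideal N S\<close> show ?thesis
    unfolding left_ideal_mod_def by (blast intro: left_ideal_plus)
qed

lemma left_ideal_mod_comp:
  assumes S: "\<forall>s\<in>S. admissible_op N s" and r: "r \<in> diffops N" and P: "P \<in> left_ideal_mod N S"
  shows "r \<circ> P \<in> left_ideal_mod N S"
proof -
  obtain Q where Q: "Q \<in> left_ideal N S" "op_equiv N P Q"
    using P unfolding left_ideal_mod_def by blast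
  have "op_equiv N (r \<circ> P) (r \<circ> Q)"
    unfolding op_equiv_def
  proof (intro ballI)
    fix g x assume g: "g \<in> coeff_fns N" and x: "x \<in> Ureg N"
    have Qg: "Q g \<in> coeff_fns N"
      using admissible_op_coeff_fns[OF left_ideal_admissible[OF S Q(1)] g] .
    have PQ: "\<forall>y\<in>Ureg N. P g y = Q g y"
      using Q(2) g unfolding op_equiv_def by blast
    then have "P g \<in> coeff_fns N"
      using coeff_fns_cong[OF Qg] by blast
    then show "(r \<circ> P) g x = (r \<circ> Q) g x"
      using admissible_op_cong[OF diffops_admissible[OF r] _ Qg PQ x] by simp
  qed
  moreover obtain Q' where "Q' \<in> left_ideal N S" "op_equiv N (r \<circ> Q) Q'"
    using left_ideal_comp[OF S r Q(1)] by blast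
  ultimately show ?thesis
    unfolding left_ideal_mod_def op_equiv_def by auto
qed

lemma left_ideal_subset_left_ideal_mod_generators:
  assumes S: "\<forall>s\<in>S. admissible_op N s" and A: "A \<subseteq> left_ideal_mod N S" and P: "P \<in> left_ideal N A"
  shows "P \<in> left_ideal_mod N S"
  using P
proof induction
  case zero
  show ?case by (rule left_ideal_subset_left_ideal_mod[OF left_ideal.zero])
next
  case (step r s J)
  have "r \<circ> s \<in> left_ideal_mod N S"
    using step.hyps A by (intro left_ideal_mod_comp[OF S]) auto
  then show ?case using step.IH by (rule left_ideal_mod_plus)
qed

lemma same_opset_left_ideal:
  assumes "\<forall>s\<in>T. admissible_op N s" "T \<subseteq> A" "A \<subseteq> left_ideal_mod N T"
  shows "same_opset N (left_ideal N A) (left_ideal N T)"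
  unfolding same_opset_def
proof (intro conjI ballI)
  fix P assume "P \<in> left_ideal N A"
  then obtain Q where "Q \<in> left_ideal N T" "op_equiv N P Q"
    using left_ideal_subset_left_ideal_mod_generators[OF assms(1,3)] unfolding left_ideal_mod_def by blast
  then show "\<exists>Q\<in>left_ideal N T. op_eq N P Q"
    unfolding op_equiv_def op_eq_def using coeff_ring_in_coeff_fns by blast
next
  fix Q assume "Q \<in> left_ideal N T"
  then show "\<exists>P\<in>left_ideal N A. op_eq N P Q"
    using left_ideal_mono[OF assms(2)] unfolding op_eq_def by blast
qed

section \<open>Reduction to consecutive generators\<close>

lemma coeff_ring_diff:
  assumes "i \<in> {1..N}" "j \<in> {1..N}"
  shows "(\<lambda>x. x i - x j) \<in> coeff_ring N"
proof -
  have "(\<lambda>x. x i + (-1) * x j) \<in> coeff_ring N"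
    using assms by (intro coeff_ring.intros)
  then show ?thesis by simp
qed

lemma coeff_ring_divide_diff:
  assumes "f \<in> coeff_ring N" "a \<in> {1..N}" "b \<in> {1..N}" "a \<noteq> b"
  shows "(\<lambda>x. f x / (c * (x a - x b))) \<in> coeff_ring N"
proof -
  have "(\<lambda>x. (1 / c) * f x * (1 / (x a - x b))) \<in> coeff_ring N"
    using assms by (intro coeff_ring.intros)
  then show ?thesis by simp
qed

lemma solve_compatibility_for_Mik:
  fixes xi xj xk ai aj ak DkMij DiMjk Mik Mij Mjk :: complex
  assumes "xi \<noteq> xj" "xj \<noteq> xk" "xi \<noteq> xk" "aj \<noteq> 0"
    and "DkMij - DiMjk = - aj * (xk - xi) / ((xi - xj) * (xj - xk)) * Mik - ak / (xj - xk) * Mij - ai / (xi - xj) * Mjk"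
  shows "Mik = (xi - xj) * (xj - xk) / (aj * (xi - xk)) * DkMij + (xj - xi) * (xj - xk) / (aj * (xi - xk)) * DiMjk
             + ak * (xi - xj) / (aj * (xi - xk)) * Mij + ai * (xj - xk) / (aj * (xi - xk)) * Mjk"
proof -
  have "(xi - xj) * inverse (xi - xj) = 1" "(xj - xk) * inverse (xj - xk) = 1"
    "(xi - xk) * inverse (xi - xk) = 1" "aj * inverse aj = 1"
    using assms by auto
  with assms(5) show ?thesis
    unfolding divide_inverse inverse_mult_distrib by algebra
qed

lemma Mop_in_left_ideal_mod_trans:
  assumes S: "\<forall>s\<in>S. admissible_op N s" and "\<alpha> j \<noteq> 0"
    and ijk: "i \<in> {1..N}" "j \<in> {1..N}" "k \<in> {1..N}" "i \<noteq> j" "j \<noteq> k" "i \<noteq> k"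
    and ij: "Mop \<alpha> i j \<in> left_ideal_mod N S" and jk: "Mop \<alpha> j k \<in> left_ideal_mod N S"
  shows "Mop \<alpha> i k \<in> left_ideal_mod N S"
proof -
  define c where "c = (\<lambda>f (x :: pt). f x / (\<alpha> j * (x i - x k)))"
  define Lk where "Lk = mulop (c (\<lambda>x. (x i - x j) * (x j - x k))) \<circ> (pd k \<circ> Mop \<alpha> i j)"
  define Li where "Li = mulop (c (\<lambda>x. (x j - x i) * (x j - x k))) \<circ> (pd i \<circ> Mop \<alpha> j k)"
  define Lij where "Lij = mulop (c (\<lambda>x. \<alpha> k * (x i - x j))) \<circ> Mop \<alpha> i j"
  define Ljk where "Ljk = mulop (c (\<lambda>x. \<alpha> i * (x j - x k))) \<circ> Mop \<alpha> j k"
  have coeff: "mulop (c f) \<in> diffops N" if "f \<in> coeff_ring N" for f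
    unfolding c_def using that ijk by (intro diffops.coeff coeff_ring_divide_diff)
  have "Lk \<in> left_ideal_mod N S" "Li \<in> left_ideal_mod N S"
    "Lij \<in> left_ideal_mod N S" "Ljk \<in> left_ideal_mod N S"
    unfolding Lk_def Li_def Lij_def Ljk_def using ij jk ijk
    by (intro left_ideal_mod_comp[OF S] coeff diffops.der coeff_ring.intros coeff_ring_diff; simp)+
  then have "(\<lambda>g x. Lk g x + Li g x + Lij g x + Ljk g x) \<in> left_ideal_mod N S"
    by (intro left_ideal_mod_plus[where P = "\<lambda>g x. _ g x + _ g x + _ g x"]
              left_ideal_mod_plus[where P = "\<lambda>g x. _ g x + _ g x"] left_ideal_mod_plus)
  moreover have "op_equiv N (Mop \<alpha> i k) (\<lambda>g x. Lk g x + Li g x + Lij g x + Ljk g x)"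
    unfolding op_equiv_def
  proof (intro ballI)
    fix g x assume g: "g \<in> coeff_fns N" and x: "x \<in> Ureg N"
    have "x i \<noteq> x j" "x j \<noteq> x k" "x i \<noteq> x k"
      using ijk x by (auto dest: Ureg_neq)
    from solve_compatibility_for_Mik[OF this \<open>\<alpha> j \<noteq> 0\<close> pd_Mop_compatibility[where \<alpha> = \<alpha>, OF g ijk x]]
    show "Mop \<alpha> i k g x = Lk g x + Li g x + Lij g x + Ljk g x"
      unfolding Lk_def Li_def Lij_def Ljk_def c_def mulop_def by simp
  qed
  ultimately show ?thesis
    by (rule left_ideal_mod_equiv)
qed

lemma Mop_in_left_ideal_mod_consecutive:
  assumes nz: "\<forall>j\<in>{1..N}. \<alpha> j \<noteq> 0" and pq: "p \<in> {1..N}" "q \<in> {1..N}" "p \<noteq> q"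
  shows "Mop \<alpha> p q \<in> left_ideal_mod N {Mop \<alpha> p (p + 1) | p. 1 \<le> p \<and> p + 1 \<le> N}"
    (is "_ \<in> left_ideal_mod N ?T")
proof -
  have T: "\<forall>s\<in>?T. admissible_op N s"
  proof
    fix s assume "s \<in> ?T"
    then obtain p where "s = Mop \<alpha> p (p + 1)" "1 \<le> p" "p + 1 \<le> N" by blast
    then show "admissible_op N s" by (simp add: admissible_op_Mop)
  qed
  have step: "Mop \<alpha> p (p + 1) \<in> left_ideal_mod N ?T" if "1 \<le> p" "p + 1 \<le> N" for p
    using that by (intro generator_in_left_ideal_mod) blast
  have ascending: "Mop \<alpha> p (p + 1 + d) \<in> left_ideal_mod N ?T" if "1 \<le> p" "p + 1 + d \<le> N" for p d
    using that
  proof (induction d)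
    case 0
    then show ?case using step by simp
  next
    case (Suc d)
    then have ij: "Mop \<alpha> p (p + 1 + d) \<in> left_ideal_mod N ?T"
      by simp
    have jk: "Mop \<alpha> (p + 1 + d) (p + 1 + d + 1) \<in> left_ideal_mod N ?T"
      using Suc.prems by (intro step) auto
    have "Mop \<alpha> p (p + 1 + d + 1) \<in> left_ideal_mod N ?T"
      by (rule Mop_in_left_ideal_mod_trans[OF T _ _ _ _ _ _ _ ij jk]) (use nz Suc.prems in auto)
    then show ?case by simp
  qed
  show ?thesis
  proof (cases "p < q")
    case True
    then show ?thesis
      using ascending[of p "q - p - 1"] pq by simp
  next
    case False
    then have "Mop \<alpha> q p \<in> left_ideal_mod N ?T"
      using ascending[of q "p - q - 1"] pq by simp
    moreover have "op_equiv N (Mop \<alpha> p q) (Mop \<alpha> q p)"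
      unfolding op_equiv_def using Mop_commute pq by blast
    ultimately show ?thesis
      by (rule left_ideal_mod_equiv)
  qed
qed

theorem mainTheorem8:
  fixes N :: nat and \<alpha> :: "nat \<Rightarrow> complex"
  shows "(\<forall>i\<in>{1..N}. \<forall>j\<in>{1..N}. \<forall>k\<in>{1..N}. i \<noteq> j \<and> j \<noteq> k \<and> i \<noteq> k \<longrightarrow>
           op_eq N (\<lambda>g x. pd k (Mop \<alpha> i j g) x - pd i (Mop \<alpha> j k g) x)
                   (\<lambda>g x. - \<alpha> j * (x k - x i) / ((x i - x j) * (x j - x k)) * Mop \<alpha> i k g x
                          - \<alpha> k / (x j - x k) * Mop \<alpha> i j g x
                          - \<alpha> i / (x i - x j) * Mop \<alpha> j k g x))
       \<and> ((\<forall>j\<in>{1..N}. \<alpha> j \<noteq> 0) \<longrightarrow>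
           same_opset N
             (left_ideal N {Mop \<alpha> p q | p q. p \<in> {1..N} \<and> q \<in> {1..N} \<and> p \<noteq> q})
             (left_ideal N {Mop \<alpha> p (p + 1) | p. 1 \<le> p \<and> p + 1 \<le> N}))"
proof (intro conjI impI)
  show "\<forall>i\<in>{1..N}. \<forall>j\<in>{1..N}. \<forall>k\<in>{1..N}. i \<noteq> j \<and> j \<noteq> k \<and> i \<noteq> k \<longrightarrow>
          op_eq N (\<lambda>g x. pd k (Mop \<alpha> i j g) x - pd i (Mop \<alpha> j k g) x)
                  (\<lambda>g x. - \<alpha> j * (x k - x i) / ((x i - x j) * (x j - x k)) * Mop \<alpha> i k g x
                         - \<alpha> k / (x j - x k) * Mop \<alpha> i j g x
                         - \<alpha> i / (x i - x j) * Mop \<alpha> j k g x)"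
    unfolding op_eq_def using pd_Mop_compatibility coeff_ring_in_coeff_fns by blast
next
  assume nz: "\<forall>j\<in>{1..N}. \<alpha> j \<noteq> 0"
  show "same_opset N
          (left_ideal N {Mop \<alpha> p q | p q. p \<in> {1..N} \<and> q \<in> {1..N} \<and> p \<noteq> q})
          (left_ideal N {Mop \<alpha> p (p + 1) | p. 1 \<le> p \<and> p + 1 \<le> N})"
  proof (rule same_opset_left_ideal)
    show "\<forall>s\<in>{Mop \<alpha> p (p + 1) | p. 1 \<le> p \<and> p + 1 \<le> N}. admissible_op N s"
      by (auto intro: admissible_op_Mop)
    show "{Mop \<alpha> p (p + 1) | p. 1 \<le> p \<and> p + 1 \<le> N}
            \<subseteq> {Mop \<alpha> p q | p q. p \<in> {1..N} \<and> q \<in> {1..N} \<and> p \<noteq> q}"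
    proof (rule subsetI)
      fix s assume "s \<in> {Mop \<alpha> p (p + 1) | p. 1 \<le> p \<and> p + 1 \<le> N}"
      then obtain p where "s = Mop \<alpha> p (p + 1)" "1 \<le> p" "p + 1 \<le> N" by blast
      then show "s \<in> {Mop \<alpha> p q | p q. p \<in> {1..N} \<and> q \<in> {1..N} \<and> p \<noteq> q}"
        by (intro CollectI exI[of _ p] exI[of _ "p + 1"]) simp
    qed
    show "{Mop \<alpha> p q | p q. p \<in> {1..N} \<and> q \<in> {1..N} \<and> p \<noteq> q}
            \<subseteq> left_ideal_mod N {Mop \<alpha> p (p + 1) | p. 1 \<le> p \<and> p + 1 \<le> N}"
      using Mop_in_left_ideal_mod_consecutive[OF nz] by (auto simp del: atLeastAtMost_iff)
  qed
qed

end
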